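(* Let $(X,d)$ be a finite metric space with points $x_1,\ldots,x_n$, where $n\ge 2$. For $p\ge 0$ let $D_p=\left[d(x_i,x_j)^p\right]_{1\le i,j\le n}$ be the $p$-distance matrix (with the convention that the diagonal entries are $0$ for every $p\ge 0$, including $p=0$). Assume that every row of $D_1$ is a permutation of the first row of $D_1$. Let $H=\{\alpha\in\mathbb{R}^n:\langle \alpha,\mathbb{1}\rangle=0\}$, where $\mathbb{1}$ is the all-ones vector. Then: (1) $\mathfrak{q}(X,d)=\inf\{p\ge 0:\det(D_p)=0\}$. (2) If $q:=\mathfrak{q}(X,d)<\infty$, then for $\mathbf{u}\in\mathbb{R}^n$ we have ($\mathbf{u}\in H$ and $\mathbf{u}^T D_q\mathbf{u}=0$) if and only if $D_q\mathbf{u}=\mathbf{0}$.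
   Context: For $p\ge 0$, a metric space $(X,d)$ has generalized roundness exponent $p$ if for all $m\in\mathbb{N}$ and all points $a_1,\ldots,a_m,b_1,\ldots,b_m\in X$, $\sum_{1\le k<l\le m}\{d(a_k,a_l)^p+d(b_k,b_l)^p\}\le \sum_{1\le j,i\le m} d(a_j,b_i)^p$. The generalized roundness $\mathfrak{q}(X,d)$ is the supremum of all generalized roundness exponents of $(X,d)$. Equivalently, $p$ is a generalized roundness exponent iff $(X,d)$ has $p$-negative type, i.e. $\sum_{i,j} d(x_i,x_j)^p\eta_i\eta_j\le 0$ for all finite $\{x_1,\dots,x_m\}\subseteq X$ and reals $\eta_i$ with $\sum\eta_i=0$. *)

theory Defs
  imports "HOL-Analysis.Analysis"
begin

definition metric_on :: "'a set \<Rightarrow> ('a \<Rightarrow> 'a \<Rightarrow> real) \<Rightarrow> bool" where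
  "metric_on X d \<longleftrightarrow>
     (\<forall>x\<in>X. \<forall>y\<in>X. d x y = 0 \<longleftrightarrow> x = y) \<and>
     (\<forall>x\<in>X. \<forall>y\<in>X. d x y = d y x) \<and>
     (\<forall>x\<in>X. \<forall>y\<in>X. \<forall>z\<in>X. d x z \<le> d x y + d y z)"

text \<open>Generalized roundness exponent (powers written with powr, so that 0 powr p = 0,
  i.e. d(x,x)^p = 0 for all p, including p = 0). Indices 0..m-1 instead of 1..m.\<close>
definition gr_exponent :: "'a set \<Rightarrow> ('a \<Rightarrow> 'a \<Rightarrow> real) \<Rightarrow> real \<Rightarrow> bool" where
  "gr_exponent X d p \<longleftrightarrow> p \<ge> 0 \<and>
     (\<forall>(m::nat) (a::nat \<Rightarrow> 'a) (b::nat \<Rightarrow> 'a).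
        (\<forall>k<m. a k \<in> X) \<longrightarrow> (\<forall>k<m. b k \<in> X) \<longrightarrow>
        (\<Sum>(k,l)\<in>{(k,l). k < l \<and> l < m}. d (a k) (a l) powr p + d (b k) (b l) powr p)
          \<le> (\<Sum>j<m. \<Sum>i<m. d (a j) (b i) powr p))"

definition gen_roundness :: "'a set \<Rightarrow> ('a \<Rightarrow> 'a \<Rightarrow> real) \<Rightarrow> ereal" where
  "gen_roundness X d = Sup {ereal p | p. gr_exponent X d p}"

definition dist_matrix :: "('n::finite \<Rightarrow> 'n \<Rightarrow> real) \<Rightarrow> real \<Rightarrow> real^'n^'n" where
  "dist_matrix d p = (\<chi> i j. d i j powr p)"

end

theory Submission
  imports Defs
begin

text \<open>
  For a symmetric zero-diagonal \<open>d\<close>, \<open>p\<close> is a generalized roundness exponent iff \<open>D\<^sub>p\<close> is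
  conditionally negative semidefinite (nonpositive on the hyperplane \<open>H\<close> of zero-sum vectors):
  counting points with multiplicity turns the roundness inequality into a quadratic form in an
  integer vector of \<open>H\<close>, and such vectors are dense in \<open>H\<close> up to scaling. By Schoenberg's
  theorem \<open>exp (- s D\<^sub>p)\<close> is then positive semidefinite, and integrating against
  \<open>s powr (- a - 1)\<close> shows that \<open>D\<^bsub>a p\<^esub>\<close> is strictly negative on \<open>H - {0}\<close> for \<open>0 < a < 1\<close>.
  Constant row sums force every null vector of \<open>D\<^sub>b\<close> into \<open>H\<close>, so \<open>D\<^sub>b\<close> is nonsingular below every
  exponent. The set of exponents is closed, so \<open>q = gen_roundness UNIV d\<close> is an exponent when finite; if
  \<open>D\<^sub>q\<close> were nonsingular, \<open>D\<^sub>q\<close> would be strictly negative on \<open>H - {0}\<close>, an open condition in \<open>q\<close>.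
  Finally, a conditionally negative semidefinite \<open>D\<^sub>q\<close> with \<open>u\<^sup>T D\<^sub>q u = 0\<close> on \<open>H\<close> has \<open>D\<^sub>q u\<close>
  constant, hence zero by the constant row sums.
\<close>

section \<open>Quadratic forms and positive semidefinite kernels\<close>

definition quad_form :: "('n::finite \<Rightarrow> 'n \<Rightarrow> real) \<Rightarrow> ('n \<Rightarrow> real) \<Rightarrow> real" where
  "quad_form A v = (\<Sum>i\<in>UNIV. \<Sum>j\<in>UNIV. v i * v j * A i j)"

definition pos_semidef :: "('n::finite \<Rightarrow> 'n \<Rightarrow> real) \<Rightarrow> bool" where
  "pos_semidef A \<longleftrightarrow> (\<forall>v. 0 \<le> quad_form A v)"

definition cond_neg_semidef :: "('n::finite \<Rightarrow> 'n \<Rightarrow> real) \<Rightarrow> bool" where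
  "cond_neg_semidef A \<longleftrightarrow> (\<forall>v. sum v UNIV = 0 \<longrightarrow> quad_form A v \<le> 0)"

lemma quad_form_add: "quad_form (\<lambda>i j. A i j + B i j) v = quad_form A v + quad_form B v"
  by (simp add: quad_form_def distrib_left sum.distrib)

lemma quad_form_diff: "quad_form (\<lambda>i j. A i j - B i j) v = quad_form A v - quad_form B v"
  by (simp add: quad_form_def right_diff_distrib sum_subtractf)

lemma quad_form_cmult: "quad_form (\<lambda>i j. c * A i j) v = c * quad_form A v"
  by (simp add: quad_form_def sum_distrib_left algebra_simps)

lemma quad_form_outer:
  "quad_form (\<lambda>i j. x i * y j) v = (\<Sum>i\<in>UNIV. v i * x i) * (\<Sum>j\<in>UNIV. v j * y j)"
  unfolding quad_form_def sum_product by (intro sum.cong refl) (simp add: algebra_simps)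

lemma quad_form_const_1: "quad_form (\<lambda>i j. 1) v = (sum v UNIV)\<^sup>2"
  unfolding quad_form_def power2_eq_square sum_product by simp

lemma quad_form_scale: "quad_form (\<lambda>i j. f i * A i j * f j) v = quad_form A (\<lambda>i. v i * f i)"
  unfolding quad_form_def by (intro sum.cong refl) (simp add: algebra_simps)

lemma quad_form_cmult_vec: "quad_form A (\<lambda>i. c * v i) = c\<^sup>2 * quad_form A v"
  unfolding quad_form_def sum_distrib_left
  by (intro sum.cong refl) (simp add: power2_eq_square algebra_simps)

lemma quad_form_add_vec:
  assumes sym: "\<And>i j. A i j = A j i"
  shows "quad_form A (\<lambda>i. u i + t * w i) =
           quad_form A u + 2 * t * (\<Sum>i\<in>UNIV. w i * (\<Sum>j\<in>UNIV. A i j * u j)) + t\<^sup>2 * quad_form A w"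
proof -
  define B where "B = (\<Sum>i\<in>UNIV. w i * (\<Sum>j\<in>UNIV. A i j * u j))"
  have B1: "(\<Sum>i\<in>UNIV. \<Sum>j\<in>UNIV. w i * u j * A i j) = B"
    unfolding B_def sum_distrib_left by (intro sum.cong refl) (simp add: algebra_simps)
  have B2: "(\<Sum>i\<in>UNIV. \<Sum>j\<in>UNIV. u i * w j * A i j) = B"
    unfolding B1[symmetric] by (subst sum.swap) (simp add: sym algebra_simps)
  have "quad_form A (\<lambda>i. u i + t * w i) =
        (\<Sum>i\<in>UNIV. \<Sum>j\<in>UNIV. u i * u j * A i j + t * (u i * w j * A i j)
          + t * (w i * u j * A i j) + t\<^sup>2 * (w i * w j * A i j))"
    unfolding quad_form_def by (intro sum.cong refl) (simp add: algebra_simps power2_eq_square)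
  also have "\<dots> = quad_form A u + t * B + t * B + t\<^sup>2 * quad_form A w"
    by (simp add: sum.distrib quad_form_def sum_distrib_left[symmetric] B1 B2)
  finally show ?thesis unfolding B_def by simp
qed

lemma sum_indicator_mult:
  "(\<Sum>i\<in>UNIV. (if i = a then 1 else 0) * f i) = (f (a::'n::finite) :: real)"
  by (simp add: if_distrib[of "\<lambda>x. x * _"] cong: if_cong)

lemma sum_mult_indicator:
  "(\<Sum>i\<in>UNIV. f i * (if i = a then 1 else 0)) = (f (a::'n::finite) :: real)"
  by (simp add: if_distrib[of "\<lambda>x. _ * x"] cong: if_cong)

lemma quad_form_indicator: "quad_form A (\<lambda>i. if i = a then 1 else 0) = A a a"
  unfolding quad_form_def by (simp add: mult.assoc sum_distrib_left[symmetric] sum_indicator_mult)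

lemma pos_semidef_diag_nonneg: "pos_semidef B \<Longrightarrow> 0 \<le> B a a"
  using quad_form_indicator[of B a] unfolding pos_semidef_def by metis

lemma pos_semidef_cmult: "pos_semidef A \<Longrightarrow> 0 \<le> c \<Longrightarrow> pos_semidef (\<lambda>i j. c * A i j)"
  by (simp add: pos_semidef_def quad_form_cmult)

lemma pos_semidef_add: "pos_semidef A \<Longrightarrow> pos_semidef B \<Longrightarrow> pos_semidef (\<lambda>i j. A i j + B i j)"
  by (simp add: pos_semidef_def quad_form_add)

lemma pos_semidef_scale: "pos_semidef A \<Longrightarrow> pos_semidef (\<lambda>i j. f i * A i j * f j)"
  by (simp add: pos_semidef_def quad_form_scale)

lemma pos_semidef_row_eq_0:
  assumes psd: "pos_semidef B" and sym: "\<And>i j. B i j = B j i" and zero: "B a a = 0"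
  shows "B a j = 0"
proof (rule ccontr)
  assume ne: "B a j \<noteq> 0"
  define t where "t = - (B j j + 1) / (2 * B a j)"
  have "0 \<le> quad_form B (\<lambda>i. (if i = j then 1 else 0) + t * (if i = a then 1 else 0))"
    using psd by (simp add: pos_semidef_def)
  also have "\<dots> = B j j + 2 * t * B a j"
    by (simp add: quad_form_add_vec[OF sym] quad_form_indicator sum_indicator_mult
        sum_mult_indicator zero)
  also have "\<dots> = -1" using ne by (simp add: t_def field_simps)
  finally show False by simp
qed

lemma pos_semidef_schur_complement:
  assumes psd: "pos_semidef B" and sym: "\<And>i j. B i j = B j i" and pos: "B a a > 0"
  shows "pos_semidef (\<lambda>i j. B i j - B i a * B j a / B a a)"
  unfolding pos_semidef_def
proof
  fix v
  define L where "L = (\<Sum>j\<in>UNIV. v j * B j a)"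
  have L': "(\<Sum>j\<in>UNIV. B a j * v j) = L"
    unfolding L_def by (intro sum.cong refl) (simp add: sym[of a] mult.commute)
  have "0 \<le> quad_form B (\<lambda>i. v i + (- L / B a a) * (if i = a then 1 else 0))"
    using psd by (simp add: pos_semidef_def)
  also have "\<dots> = quad_form B v - 2 * (L / B a a) * L + (L / B a a)\<^sup>2 * B a a"
    unfolding quad_form_add_vec[OF sym] by (simp add: quad_form_indicator sum_indicator_mult L')
  also have "\<dots> = quad_form B v - L * L / B a a"
    using pos by (simp add: power2_eq_square field_simps)
  also have "\<dots> = quad_form (\<lambda>i j. B i j - B i a * B j a / B a a) v"
    using quad_form_outer[of "\<lambda>i. B i a / B a a" "\<lambda>j. B j a" v]
    by (simp add: quad_form_diff L_def sum_divide_distrib[symmetric])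
  finally show "0 \<le> quad_form (\<lambda>i j. B i j - B i a * B j a / B a a) v" .
qed

text \<open>Schur product theorem, by induction on the rows where \<open>B\<close> may be nonzero: subtracting
  the rank-one term \<open>B i a * B j a / B a a\<close> removes row \<open>a\<close> and keeps \<open>B\<close> positive semidefinite.\<close>
lemma pos_semidef_mult_supported:
  assumes A: "pos_semidef A" and "finite F"
    and "pos_semidef B" "\<And>i j. B i j = B j i" "\<And>i j. B i j \<noteq> 0 \<Longrightarrow> i \<in> F"
  shows "pos_semidef (\<lambda>i j. A i j * B i j)"
  using assms(2-5)
proof (induction F arbitrary: B rule: finite_induct)
  case empty
  then have "B i j = 0" for i j by blast
  then have "(\<lambda>i j. A i j * B i j) = (\<lambda>i j. 0 * A i j)" by simp
  then show ?case by (simp add: pos_semidef_def quad_form_def)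
next
  case (insert a F)
  show ?case
  proof (cases "B a a = 0")
    case True
    have "i \<in> F" if "B i j \<noteq> 0" for i j
    proof -
      have "i \<noteq> a" using that pos_semidef_row_eq_0[OF insert.prems(1,2) True] by blast
      then show ?thesis using insert.prems(3)[OF that] by simp
    qed
    then show ?thesis by (rule insert.IH[OF insert.prems(1,2)])
  next
    case False
    then have pos: "B a a > 0" using pos_semidef_diag_nonneg[OF insert.prems(1), of a] by simp
    define C where "C = (\<lambda>i j. B i j - B i a * B j a / B a a)"
    have supp: "i \<in> F" if "C i j \<noteq> 0" for i j
    proof -
      have "C a j = 0" for j using False insert.prems(2)[of j a] by (simp add: C_def)
      then have "i \<noteq> a" using that by auto
      moreover have "B i j \<noteq> 0 \<or> B i a \<noteq> 0" using that by (auto simp: C_def)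
      ultimately show ?thesis using insert.prems(3) by blast
    qed
    have sym: "C i j = C j i" for i j
      using insert.prems(2) by (simp add: C_def mult.commute)
    have "pos_semidef C"
      unfolding C_def by (rule pos_semidef_schur_complement[OF insert.prems(1,2) pos])
    then have AC: "pos_semidef (\<lambda>i j. A i j * C i j)"
      using sym supp by (rule insert.IH)
    have "pos_semidef (\<lambda>i j. (1 / B a a) * (B i a * A i j * B j a))"
      using pos by (intro pos_semidef_cmult pos_semidef_scale A) auto
    with AC have "pos_semidef (\<lambda>i j. A i j * C i j + (1 / B a a) * (B i a * A i j * B j a))"
      by (rule pos_semidef_add)
    moreover have "A i j * C i j + (1 / B a a) * (B i a * A i j * B j a) = A i j * B i j" for i j
      by (simp add: C_def algebra_simps)
    ultimately show ?thesis by simp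
  qed
qed

theorem pos_semidef_mult:
  fixes A B :: "'n::finite \<Rightarrow> 'n \<Rightarrow> real"
  assumes "pos_semidef A" "pos_semidef B" "\<And>i j. B i j = B j i"
  shows "pos_semidef (\<lambda>i j. A i j * B i j)"
  by (rule pos_semidef_mult_supported[OF assms(1) _ assms(2,3)]) auto

lemma pos_semidef_power:
  fixes G :: "'n::finite \<Rightarrow> 'n \<Rightarrow> real"
  assumes "pos_semidef G" "\<And>i j. G i j = G j i"
  shows "pos_semidef (\<lambda>i j. G i j ^ m)"
proof (induction m)
  case 0
  then show ?case by (simp add: pos_semidef_def quad_form_const_1)
next
  case (Suc m)
  then show ?case using pos_semidef_mult[OF Suc assms] by (simp add: mult.commute)
qed

lemma pos_semidef_exp:
  fixes G :: "'n::finite \<Rightarrow> 'n \<Rightarrow> real"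
  assumes "pos_semidef G" "\<And>i j. G i j = G j i"
  shows "pos_semidef (\<lambda>i j. exp (G i j))"
  unfolding pos_semidef_def
proof
  fix v
  have "(\<lambda>n. \<Sum>i\<in>UNIV. \<Sum>j\<in>UNIV. v i * v j * (G i j ^ n /\<^sub>R fact n)) sums
          quad_form (\<lambda>i j. exp (G i j)) v"
    unfolding quad_form_def by (intro sums_sum sums_mult exp_converges)
  moreover have "(\<Sum>i\<in>UNIV. \<Sum>j\<in>UNIV. v i * v j * (G i j ^ n /\<^sub>R fact n)) =
                   quad_form (\<lambda>i j. G i j ^ n) v / fact n" for n
    unfolding quad_form_def sum_divide_distrib by (intro sum.cong refl) (simp add: divide_inverse)
  moreover have "0 \<le> quad_form (\<lambda>i j. G i j ^ n) v / fact n" for n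
    using pos_semidef_power[OF assms] by (simp add: pos_semidef_def)
  ultimately show "0 \<le> quad_form (\<lambda>i j. exp (G i j)) v"
    by (metis (no_types, lifting) sums_le sums_zero)
qed

lemma pos_semidef_if_cond_neg_semidef:
  fixes K :: "'n::finite \<Rightarrow> 'n \<Rightarrow> real"
  assumes sym: "\<And>i j. K i j = K j i" and diag: "\<And>i. K i i = 0" and cnd: "cond_neg_semidef K"
  shows "pos_semidef (\<lambda>i j. K i a + K a j - K i j)"
  unfolding pos_semidef_def
proof
  fix v :: "'n \<Rightarrow> real"
  define S where "S = sum v UNIV"
  define L where "L = (\<Sum>j\<in>UNIV. v j * K a j)"
  have L': "(\<Sum>i\<in>UNIV. v i * K i a) = L"
    unfolding L_def by (intro sum.cong refl) (metis sym)
  have "sum (\<lambda>i. v i + (- S) * (if i = a then 1 else 0)) UNIV = 0"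
    using sum_mult_indicator[of "\<lambda>_. S" a] by (simp add: S_def sum_subtractf)
  then have "quad_form K (\<lambda>i. v i + (- S) * (if i = a then 1 else 0)) \<le> 0"
    using cnd by (simp add: cond_neg_semidef_def)
  moreover have "quad_form K (\<lambda>i. v i + (- S) * (if i = a then 1 else 0)) = quad_form K v - 2 * S * L"
    unfolding quad_form_add_vec[OF sym]
    by (simp add: quad_form_indicator sum_indicator_mult diag L_def mult.commute[of "K a _"])
  moreover have "quad_form (\<lambda>i j. K i a + K a j - K i j) v = 2 * S * L - quad_form K v"
    using quad_form_outer[of "\<lambda>i. K i a" "\<lambda>_. 1" v] quad_form_outer[of "\<lambda>_. 1" "\<lambda>j. K a j" v]
    by (simp add: quad_form_add quad_form_diff L' L_def S_def)
  ultimately show "0 \<le> quad_form (\<lambda>i j. K i a + K a j - K i j) v" by simp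
qed

theorem Schoenberg_pos_semidef_exp:
  fixes K :: "'n::finite \<Rightarrow> 'n \<Rightarrow> real"
  assumes sym: "\<And>i j. K i j = K j i" and diag: "\<And>i. K i i = 0"
    and cnd: "cond_neg_semidef K" and s: "s \<ge> 0"
  shows "pos_semidef (\<lambda>i j. exp (- (s * K i j)))"
proof -
  fix a :: 'n
  define G where "G = (\<lambda>i j. s * (K i a + K a j - K i j))"
  have "G i j = G j i" for i j
    unfolding G_def using sym by (simp add: algebra_simps)
  then have "pos_semidef (\<lambda>i j. exp (G i j))"
    using pos_semidef_if_cond_neg_semidef[OF sym diag cnd] s
    by (intro pos_semidef_exp) (auto simp: G_def intro: pos_semidef_cmult)
  then have "pos_semidef (\<lambda>i j. exp (- (s * K i a)) * exp (G i j) * exp (- (s * K j a)))"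
    by (rule pos_semidef_scale)
  moreover have "exp (- (s * K i a)) * exp (G i j) * exp (- (s * K j a)) = exp (- (s * K i j))" for i j
    unfolding G_def using sym[of j a] by (simp add: exp_add[symmetric] algebra_simps)
  ultimately show ?thesis by simp
qed

section \<open>Fractional powers of conditionally negative semidefinite kernels\<close>

text \<open>Substituting \<open>r = t s\<close> in \<open>\<integral>\<^sub>0\<^sup>\<infinity> powr_integrand a r dr\<close> writes \<open>t powr a\<close> as a mixture of
  the functions \<open>1 - exp (- t s)\<close>; applied entrywise to \<open>D\<^sub>p\<close> this reduces \<open>D\<^bsub>a p\<^esub>\<close> to the kernels
  \<open>exp (- s D\<^sub>p)\<close> of Schoenberg's theorem.\<close>
definition powr_integrand :: "real \<Rightarrow> real \<Rightarrow> real" where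
  "powr_integrand a r = (1 - exp (- r)) * r powr (- a - 1)"

lemma powr_integrand_nonneg: "r \<ge> 0 \<Longrightarrow> 0 \<le> powr_integrand a r"
  by (simp add: powr_integrand_def)

lemma powr_integrand_absolutely_integrable:
  assumes a: "0 < a" "a < 1"
  shows "powr_integrand a absolutely_integrable_on {0<..}"
proof -
  define g where "g = (\<lambda>x::real. if x \<le> 1 then x powr (- a) else x powr (- a - 1))"
  have i1: "(g has_integral (1 powr (- a + 1) / (- a + 1))) {0..1}"
    using has_integral_powr_from_0[of "- a" 1] a
    by (rule_tac has_integral_eq[rotated]) (auto simp: g_def)
  have i2: "(g has_integral (- (1 powr (- a - 1 + 1)) / (- a - 1 + 1))) {1..}"
  proof (rule has_integral_eq[rotated])
    show "((\<lambda>x. x powr (- a - 1)) has_integral (- (1 powr (- a - 1 + 1)) / (- a - 1 + 1))) {1..}"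
      using has_integral_powr_to_inf[of "- a - 1" 1] a by simp
    show "x powr (- a - 1) = g x" if "x \<in> {1..}" for x
      using that by (cases "x = 1") (auto simp: g_def)
  qed
  have "{0..1} \<union> {1..} = {0::real..}" by auto
  then have "g integrable_on {0..}"
    using has_integral_Un[OF i1 i2] negligible_subset[of "{1}"] by (auto simp: integrable_on_def)
  then have g_int: "g integrable_on {0<..}"
    by (rule integrable_spike_set) (auto intro: negligible_subset[of "{0}"])
  have cont: "continuous_on {0<..} (powr_integrand a)"
    unfolding powr_integrand_def by (intro continuous_intros) auto
  have bound: "\<bar>powr_integrand a x\<bar> \<le> g x" if "x \<in> {0<..}" for x
  proof (cases "x \<le> 1")
    case True
    have "1 - exp (- x) \<le> x" using exp_ge_add_one_self[of "- x"] by simp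
    then have "powr_integrand a x \<le> x * x powr (- a - 1)"
      unfolding powr_integrand_def by (intro mult_right_mono) auto
    also have "x * x powr (- a - 1) = x powr (- a)"
      using that by (simp add: powr_add[symmetric] powr_mult_base)
    finally show ?thesis using True that powr_integrand_nonneg[of x a] by (simp add: g_def)
  next
    case False
    have "powr_integrand a x \<le> 1 * x powr (- a - 1)"
      unfolding powr_integrand_def by (intro mult_right_mono) auto
    then show ?thesis using False that powr_integrand_nonneg[of x a] by (simp add: g_def)
  qed
  have "powr_integrand a integrable_on {0<..}"
    by (rule measurable_bounded_by_integrable_imp_integrable_real[OF
          continuous_imp_measurable_on_sets_lebesgue[OF cont] g_int bound]) auto
  then show ?thesis
    by (rule nonnegative_absolutely_integrable_1) (auto simp: powr_integrand_nonneg)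
qed

lemma has_integral_powr_integrand_scaled:
  assumes a: "0 < a" "a < 1" and t: "t \<ge> 0"
  shows "((\<lambda>s. (1 - exp (- (t * s))) * s powr (- a - 1)) has_integral
           (t powr a * integral {0<..} (powr_integrand a))) {0<..}"
proof (cases "t = 0")
  case True
  then show ?thesis by simp
next
  case False
  then have tp: "t > 0" using t by simp
  have "x \<in> (*) t ` {0<..}" if "x > 0" for x
    using that tp by (intro image_eqI[of _ _ "x / t"]) auto
  then have image: "(*) t ` {0<..} = {0::real<..}" using tp by auto
  have "(\<lambda>x. \<bar>t\<bar> * powr_integrand a (t * x)) absolutely_integrable_on {0<..} \<and>
      integral {0<..} (\<lambda>x. \<bar>t\<bar> * powr_integrand a (t * x)) = integral {0<..} (powr_integrand a)"
  proof (subst has_absolute_integral_change_of_variables_1'[of "{0<..}" "\<lambda>x. t * x" "\<lambda>_. t"])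
    show "{0::real<..} \<in> sets lebesgue" by auto
    show "((*) t has_field_derivative t) (at x within {0<..})" for x
      by (auto intro!: derivative_eq_intros)
    show "inj_on ((*) t) {0<..}" using tp by (auto simp: inj_on_def)
    show "powr_integrand a absolutely_integrable_on (*) t ` {0<..} \<and>
          integral ((*) t ` {0<..}) (powr_integrand a) = integral {0<..} (powr_integrand a)"
      using powr_integrand_absolutely_integrable[OF a] image by simp
  qed
  then have "((\<lambda>x. \<bar>t\<bar> * powr_integrand a (t * x)) has_integral integral {0<..} (powr_integrand a)) {0<..}"
    using set_lebesgue_integral_eq_integral(1) integrable_integral by metis
  from has_integral_cmul[OF this, of "t powr a"]
  have "((\<lambda>x. t powr a * (\<bar>t\<bar> * powr_integrand a (t * x))) has_integral
          t powr a * integral {0<..} (powr_integrand a)) {0<..}"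
    by simp
  then show ?thesis
  proof (rule has_integral_eq[rotated])
    fix x :: real assume "x \<in> {0<..}"
    then have "(t * x) powr (- a - 1) = t powr (- a - 1) * x powr (- a - 1)"
      using tp by (simp add: powr_mult)
    moreover have "t powr a * (t * t powr (- a - 1)) = 1"
      using tp by (simp add: powr_mult_base powr_add[symmetric])
    ultimately show "t powr a * (\<bar>t\<bar> * powr_integrand a (t * x)) = (1 - exp (- (t * x))) * x powr (- a - 1)"
      using tp by (simp add: powr_integrand_def)
  qed
qed

lemma integral_powr_integrand_nonneg: "0 < a \<Longrightarrow> a < 1 \<Longrightarrow> 0 \<le> integral {0<..} (powr_integrand a)"
  using powr_integrand_absolutely_integrable set_lebesgue_integral_eq_integral(1)
  by (intro integral_nonneg) (auto simp: powr_integrand_nonneg)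

lemma exp_neg_le_inverse: "x > 0 \<Longrightarrow> exp (- x) \<le> 1 / (x::real)"
  using exp_ge_add_one_self[of x] by (simp add: exp_minus field_simps del: exp_ge_add_one_self)

lemma quad_form_exp_neg_lower_bound:
  fixes K :: "'n::finite \<Rightarrow> 'n \<Rightarrow> real"
  assumes diag: "\<And>i. K i i = 0" and pos: "\<And>i j. i \<noteq> j \<Longrightarrow> K i j > 0" and s: "s > 0"
  shows "(\<Sum>i\<in>UNIV. (u i)\<^sup>2) - (\<Sum>i\<in>UNIV. \<Sum>j\<in>UNIV. if i = j then 0 else \<bar>u i * u j\<bar> / K i j) / s
           \<le> quad_form (\<lambda>i j. exp (- (s * K i j))) u"
proof -
  define off where "off = (\<lambda>i j. if i = j then 0 else u i * u j * exp (- (s * K i j)))"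
  have "quad_form (\<lambda>i j. exp (- (s * K i j))) u =
          (\<Sum>i\<in>UNIV. \<Sum>j\<in>UNIV. (if i = j then (u i)\<^sup>2 else 0) + off i j)"
    unfolding quad_form_def off_def by (intro sum.cong refl) (auto simp: diag power2_eq_square)
  also have "\<dots> = (\<Sum>i\<in>UNIV. (u i)\<^sup>2) + (\<Sum>i\<in>UNIV. \<Sum>j\<in>UNIV. off i j)"
    by (simp add: sum.distrib)
  finally have split: "quad_form (\<lambda>i j. exp (- (s * K i j))) u =
                         (\<Sum>i\<in>UNIV. (u i)\<^sup>2) + (\<Sum>i\<in>UNIV. \<Sum>j\<in>UNIV. off i j)" .
  have "- off i j \<le> (if i = j then 0 else \<bar>u i * u j\<bar> / K i j / s)" for i j
  proof (cases "i = j")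
    case False
    have "- (u i * u j * exp (- (s * K i j))) \<le> \<bar>u i * u j\<bar> * exp (- (s * K i j))"
      by (metis abs_ge_minus_self abs_mult_pos exp_ge_zero)
    also have "\<dots> \<le> \<bar>u i * u j\<bar> * (1 / (s * K i j))"
      using exp_neg_le_inverse[of "s * K i j"] pos[OF False] s by (intro mult_left_mono) auto
    finally show ?thesis using False by (simp add: off_def field_simps)
  qed (simp add: off_def)
  then have "- (\<Sum>i\<in>UNIV. \<Sum>j\<in>UNIV. off i j) \<le>
               (\<Sum>i\<in>UNIV. \<Sum>j\<in>UNIV. if i = j then 0 else \<bar>u i * u j\<bar> / K i j / s)"
    unfolding sum_negf[symmetric] by (intro sum_mono)
  also have "\<dots> = (\<Sum>i\<in>UNIV. \<Sum>j\<in>UNIV. if i = j then 0 else \<bar>u i * u j\<bar> / K i j) / s"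
    unfolding sum_divide_distrib by (intro sum.cong refl) auto
  finally show ?thesis using split by simp
qed

lemma has_integral_quad_form_exp_neg:
  fixes K :: "'n::finite \<Rightarrow> 'n \<Rightarrow> real"
  assumes K: "\<And>i j. K i j \<ge> 0" and a: "0 < a" "a < 1" and u: "sum u UNIV = 0"
  shows "((\<lambda>s. quad_form (\<lambda>i j. exp (- (s * K i j))) u * s powr (- a - 1)) has_integral
           - (integral {0<..} (powr_integrand a) * quad_form (\<lambda>i j. K i j powr a) u)) {0<..}"
proof -
  define C where "C = integral {0<..} (powr_integrand a)"
  have "((\<lambda>s. \<Sum>i\<in>UNIV. \<Sum>j\<in>UNIV. u i * u j * ((1 - exp (- (K i j * s))) * s powr (- a - 1)))
          has_integral (\<Sum>i\<in>UNIV. \<Sum>j\<in>UNIV. u i * u j * (K i j powr a * C))) {0<..}"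
    unfolding C_def using K
    by (intro has_integral_sum finite_UNIV has_integral_mult_right has_integral_powr_integrand_scaled a)
      auto
  note has_integral_neg[OF this]
  moreover have "(\<Sum>i\<in>UNIV. \<Sum>j\<in>UNIV. u i * u j * (K i j powr a * C)) =
                   C * quad_form (\<lambda>i j. K i j powr a) u"
    unfolding quad_form_def sum_distrib_left by (intro sum.cong refl) (simp add: algebra_simps)
  moreover have "(\<Sum>i\<in>UNIV. \<Sum>j\<in>UNIV. u i * u j * ((1 - exp (- (K i j * s))) * s powr (- a - 1))) =
                   - (quad_form (\<lambda>i j. exp (- (s * K i j))) u * s powr (- a - 1))" for s
  proof -
    have "(\<Sum>i\<in>UNIV. \<Sum>j\<in>UNIV. u i * u j) = 0"
      using u by (simp add: sum_product[symmetric])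
    moreover have "(\<Sum>i\<in>UNIV. \<Sum>j\<in>UNIV. u i * u j * ((1 - exp (- (K i j * s))) * s powr (- a - 1))) =
        (\<Sum>i\<in>UNIV. \<Sum>j\<in>UNIV. u i * u j) * s powr (- a - 1)
          - quad_form (\<lambda>i j. exp (- (s * K i j))) u * s powr (- a - 1)"
      unfolding quad_form_def sum_distrib_right sum_subtractf[symmetric]
      by (intro sum.cong refl) (simp add: algebra_simps)
    ultimately show ?thesis by simp
  qed
  ultimately show ?thesis by (simp add: C_def)
qed

text \<open>The integrand is nonnegative by Schoenberg's theorem, and for large \<open>s\<close> the diagonal
  term \<open>\<Sum>i. (u i)\<^sup>2\<close> dominates, so the integral is positive.\<close>
theorem quad_form_powr_neg:
  fixes K :: "'n::finite \<Rightarrow> 'n \<Rightarrow> real"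
  assumes sym: "\<And>i j. K i j = K j i" and diag: "\<And>i. K i i = 0"
    and pos: "\<And>i j. i \<noteq> j \<Longrightarrow> K i j > 0" and cnd: "cond_neg_semidef K"
    and a: "0 < a" "a < 1" and u: "sum u UNIV = 0" "u \<noteq> (\<lambda>_. 0)"
  shows "quad_form (\<lambda>i j. K i j powr a) u < 0"
proof -
  define \<psi> where "\<psi> = (\<lambda>s. quad_form (\<lambda>i j. exp (- (s * K i j))) u * s powr (- a - 1))"
  define N where "N = (\<Sum>i\<in>UNIV. (u i)\<^sup>2)"
  define T where "T = (\<Sum>i\<in>UNIV. \<Sum>j\<in>UNIV. if i = j then 0 else \<bar>u i * u j\<bar> / K i j)"
  have K: "K i j \<ge> 0" for i j using pos[of i j] diag[of i] by (cases "i = j") auto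
  have int: "(\<psi> has_integral - (integral {0<..} (powr_integrand a) * quad_form (\<lambda>i j. K i j powr a) u)) {0<..}"
    unfolding \<psi>_def by (rule has_integral_quad_form_exp_neg[OF K a u(1)])
  have \<psi>_nonneg: "0 \<le> \<psi> s" if "s \<in> {0<..}" for s
    using Schoenberg_pos_semidef_exp[OF sym diag cnd, of s] that
    by (simp add: \<psi>_def pos_semidef_def)
  obtain k where "u k \<noteq> 0" using u(2) by auto
  then have N: "N > 0"
    unfolding N_def by (intro sum_pos2[of _ k]) auto
  have T: "T \<ge> 0" unfolding T_def using K by (intro sum_nonneg) auto
  define s0 where "s0 = 2 * T / N + 1"
  define c where "c = N / 2 * (s0 + 1) powr (- a - 1)"
  have s0: "s0 > 0" unfolding s0_def using T N by (simp add: add_nonneg_pos)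
  have lower: "c \<le> \<psi> s" if s: "s \<in> {s0..s0+1}" for s
  proof -
    have "T / s \<le> T / s0" using s s0 T by (intro divide_left_mono) auto
    also have "T / s0 \<le> N / 2" using N T s0 unfolding s0_def by (simp add: field_simps)
    finally have "N / 2 \<le> quad_form (\<lambda>i j. exp (- (s * K i j))) u"
      using quad_form_exp_neg_lower_bound[where K=K and s=s and u=u, OF diag pos] s s0 by (simp add: N_def T_def)
    moreover have "(s0 + 1) powr (- a - 1) \<le> s powr (- a - 1)"
      using s s0 a by (intro powr_mono2') auto
    ultimately show ?thesis unfolding c_def \<psi>_def using N by (intro mult_mono) auto
  qed
  have \<psi>_int: "\<psi> integrable_on {0<..}" using int by blast
  have "0 < c" unfolding c_def using N s0 by simp
  also have "c = integral {s0..s0+1} (\<lambda>_. c)" by simp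
  also have "\<dots> \<le> integral {s0..s0+1} \<psi>"
    using lower s0 by (intro integral_le integrable_on_subinterval[OF \<psi>_int]) auto
  also have "\<dots> \<le> integral {0<..} \<psi>"
    using s0 \<psi>_nonneg by (intro integral_subset_le integrable_on_subinterval[OF \<psi>_int] \<psi>_int) auto
  also have "\<dots> = - (integral {0<..} (powr_integrand a) * quad_form (\<lambda>i j. K i j powr a) u)"
    using int by (rule integral_unique)
  finally show ?thesis
    using integral_powr_integrand_nonneg[OF a] by (simp add: mult_less_0_iff)
qed

section \<open>Generalized roundness and negative type\<close>

lemma sum_lessThan_square_eq_pairs:
  fixes f :: "nat \<Rightarrow> nat \<Rightarrow> real"
  assumes sym: "\<And>k l. f k l = f l k" and diag: "\<And>k. f k k = 0"
  shows "(\<Sum>k<m. \<Sum>l<m. f k l) = 2 * (\<Sum>(k,l)\<in>{(k,l). k < l \<and> l < m}. f k l)"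
proof (induction m)
  case 0
  then show ?case by simp
next
  case (Suc m)
  have fin: "finite {(k,l). k < l \<and> l < m}"
    by (rule finite_subset[of _ "{..<m} \<times> {..<m}"]) auto
  have "{(k,l). k < l \<and> l < Suc m} = {(k,l). k < l \<and> l < m} \<union> (\<lambda>k. (k, m)) ` {..<m}"
    by auto
  moreover have "{(k,l). k < l \<and> l < m} \<inter> (\<lambda>k. (k, m)) ` {..<m} = {}" by auto
  moreover have "inj_on (\<lambda>k. (k, m)) {..<m}" by (auto simp: inj_on_def)
  ultimately have "(\<Sum>(k,l)\<in>{(k,l). k < l \<and> l < Suc m}. f k l) =
                     (\<Sum>(k,l)\<in>{(k,l). k < l \<and> l < m}. f k l) + (\<Sum>k<m. f k m)"
    using fin by (simp add: sum.union_disjoint sum.reindex)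
  moreover have "(\<Sum>k<Suc m. \<Sum>l<Suc m. f k l) = (\<Sum>k<m. \<Sum>l<m. f k l) + 2 * (\<Sum>k<m. f k m)"
  proof -
    have "(\<Sum>l<m. f m l) = (\<Sum>k<m. f k m)" by (intro sum.cong refl) (rule sym)
    then show ?thesis by (simp add: sum.distrib diag)
  qed
  ultimately show ?case using Suc.IH by simp
qed

lemma sum_lessThan_eq_weighted:
  fixes g :: "'n::finite \<Rightarrow> real" and a :: "nat \<Rightarrow> 'n"
  shows "(\<Sum>k<m. g (a k)) = (\<Sum>x\<in>UNIV. real (card {k. k < m \<and> a k = x}) * g x)"
proof -
  have "(\<Sum>k<m. g (a k)) = (\<Sum>x\<in>UNIV. \<Sum>k\<in>{k. k \<in> {..<m} \<and> a k = x}. g (a k))"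
    by (rule sum.group[symmetric]) auto
  also have "\<dots> = (\<Sum>x\<in>UNIV. \<Sum>k\<in>{k. k < m \<and> a k = x}. g x)"
    by (intro sum.cong) auto
  finally show ?thesis by simp
qed

lemma ex_seq_with_multiplicities:
  fixes c :: "'n::finite \<Rightarrow> nat"
  obtains a :: "nat \<Rightarrow> 'n"
  where "\<And>g :: 'n \<Rightarrow> real. (\<Sum>k<sum c UNIV. g (a k)) = (\<Sum>x\<in>UNIV. real (c x) * g x)"
proof -
  obtain ys :: "'n list" where ys: "set ys = UNIV" "distinct ys"
    using finite_distinct_list[of "UNIV :: 'n set"] by auto
  define L where "L = concat (map (\<lambda>x. replicate (c x) x) ys)"
  have "length L = sum c UNIV"
    using ys by (simp add: L_def length_concat sum_list_distinct_conv_sum_set comp_def)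
  moreover have "(\<Sum>k<length L. g (L ! k)) = (\<Sum>x\<in>UNIV. real (c x) * g x)" for g :: "'n \<Rightarrow> real"
  proof -
    have "(\<Sum>k<length L. g (L ! k)) = sum_list (map g L)"
      using sum_list_sum_nth[of "map g L"] by (simp add: atLeast0LessThan)
    also have "\<dots> = sum_list (map (\<lambda>x. real (c x) * g x) ys)"
      unfolding L_def by (induction ys) (simp_all add: sum_list_replicate)
    also have "\<dots> = (\<Sum>x\<in>UNIV. real (c x) * g x)"
      using ys by (simp add: sum_list_distinct_conv_sum_set)
    finally show ?thesis .
  qed
  ultimately show ?thesis by (intro that[of "(!) L"]) simp
qed

lemma roundness_sum_diff_eq_quad_form:
  fixes D :: "'n::finite \<Rightarrow> 'n \<Rightarrow> real" and a b :: "nat \<Rightarrow> 'n"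
  assumes sym: "\<And>i j. D i j = D j i" and diag: "\<And>i. D i i = 0"
    and ca: "\<And>g. (\<Sum>k<m. g (a k)) = (\<Sum>x\<in>UNIV. ca x * g x)"
    and cb: "\<And>g. (\<Sum>k<m. g (b k)) = (\<Sum>x\<in>UNIV. cb x * g x)"
  shows "(\<Sum>(k,l)\<in>{(k,l). k < l \<and> l < m}. D (a k) (a l) + D (b k) (b l))
           - (\<Sum>j<m. \<Sum>i<m. D (a j) (b i)) = quad_form D (\<lambda>x. ca x - cb x) / 2"
proof -
  have double_sum: "(\<Sum>k<m. \<Sum>l<m. D (e k) (e' l)) = (\<Sum>x\<in>UNIV. \<Sum>y\<in>UNIV. c x * c' y * D x y)"
    if e: "\<And>g. (\<Sum>k<m. g (e k)) = (\<Sum>x\<in>UNIV. c x * g x)"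
      and e': "\<And>g. (\<Sum>k<m. g (e' k)) = (\<Sum>x\<in>UNIV. c' x * g x)" for e e' c c'
    using e[of "\<lambda>x. \<Sum>y\<in>UNIV. c' y * D x y"]
    by (simp add: e' sum_distrib_left mult.assoc)
  define X where "X = (\<Sum>i\<in>UNIV. cb i * (\<Sum>j\<in>UNIV. D i j * ca j))"
  have X: "(\<Sum>x\<in>UNIV. \<Sum>y\<in>UNIV. ca x * cb y * D x y) = X"
    unfolding X_def sum_distrib_left by (subst sum.swap) (simp add: sym mult_ac)
  have "2 * (\<Sum>(k,l)\<in>{(k,l). k < l \<and> l < m}. D (a k) (a l) + D (b k) (b l)) =
          (\<Sum>k<m. \<Sum>l<m. D (a k) (a l) + D (b k) (b l))"
    by (rule sum_lessThan_square_eq_pairs[symmetric]) (auto simp: sym diag)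
  also have "\<dots> = quad_form D ca + quad_form D cb"
    unfolding quad_form_def using double_sum[OF ca ca] double_sum[OF cb cb]
    by (simp add: sum.distrib)
  also have "\<dots> = quad_form D (\<lambda>x. ca x + (- 1) * cb x) + 2 * X"
    unfolding quad_form_add_vec[OF sym] X_def by simp
  finally show ?thesis
    using double_sum[OF ca cb] X by simp
qed

lemma gr_exponent_if_cond_neg_semidef:
  fixes d :: "'n::finite \<Rightarrow> 'n \<Rightarrow> real"
  assumes sym: "\<And>i j. d i j = d j i" and diag: "\<And>i. d i i = 0" and p: "p \<ge> 0"
    and cnd: "cond_neg_semidef (\<lambda>i j. d i j powr p)"
  shows "gr_exponent UNIV d p"
  unfolding gr_exponent_def
proof (intro conjI p allI impI)
  fix m :: nat and a b :: "nat \<Rightarrow> 'n"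
  define ca where "ca = (\<lambda>x. real (card {k. k < m \<and> a k = x}))"
  define cb where "cb = (\<lambda>x. real (card {k. k < m \<and> b k = x}))"
  have a: "(\<Sum>k<m. g (a k)) = (\<Sum>x\<in>UNIV. ca x * g x)"
    and b: "(\<Sum>k<m. g (b k)) = (\<Sum>x\<in>UNIV. cb x * g x)" for g
    unfolding ca_def cb_def by (rule sum_lessThan_eq_weighted)+
  note diff = roundness_sum_diff_eq_quad_form[of "\<lambda>i j. d i j powr p", OF _ _ a b]
  have "sum ca UNIV = m" and "sum cb UNIV = m"
    using a[of "\<lambda>_. 1"] b[of "\<lambda>_. 1"] by simp_all
  then have "quad_form (\<lambda>i j. d i j powr p) (\<lambda>x. ca x - cb x) \<le> 0"
    using cnd by (simp add: cond_neg_semidef_def sum_subtractf)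
  then show "(\<Sum>(k, l)\<in>{(k, l). k < l \<and> l < m}. d (a k) (a l) powr p + d (b k) (b l) powr p)
               \<le> (\<Sum>j<m. \<Sum>i<m. d (a j) (b i) powr p)"
    using diff sym diag by simp
qed

lemma LIMSEQ_floor_mult_divide: "(\<lambda>n. \<lfloor>real (Suc n) * c\<rfloor> / real (Suc n)) \<longlonglongrightarrow> c"
proof (rule tendsto_sandwich[of "\<lambda>n. c - inverse (real (Suc n))" _ _ "\<lambda>n. c"])
  have "c - inverse (real (Suc n)) = (real (Suc n) * c - 1) / real (Suc n)" for n
    by (simp add: field_simps)
  then show "\<forall>\<^sub>F n in sequentially. c - inverse (real (Suc n)) \<le> \<lfloor>real (Suc n) * c\<rfloor> / real (Suc n)"
    by (intro always_eventually allI) (simp add: divide_right_mono)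
  show "\<forall>\<^sub>F n in sequentially. \<lfloor>real (Suc n) * c\<rfloor> / real (Suc n) \<le> c"
    by (intro always_eventually allI) (simp add: field_simps)
  show "(\<lambda>n. c - inverse (real (Suc n))) \<longlonglongrightarrow> c"
    using tendsto_diff[OF tendsto_const LIMSEQ_inverse_real_of_nat, of c] by simp
qed simp

text \<open>Integer vectors with zero sum are dense in the rescaled hyperplane: round all but one
  coordinate of \<open>n v\<close> down and let the remaining coordinate restore the zero sum.\<close>
lemma cond_neg_semidef_if_int:
  fixes D :: "'n::finite \<Rightarrow> 'n \<Rightarrow> real"
  assumes int: "\<And>z::'n \<Rightarrow> int. sum z UNIV = (0::int) \<Longrightarrow> quad_form D (\<lambda>x. z x) \<le> 0"
  shows "cond_neg_semidef D"
  unfolding cond_neg_semidef_def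
proof (intro allI impI)
  fix v :: "'n \<Rightarrow> real" assume v: "sum v UNIV = 0"
  define x0 where "x0 = (undefined :: 'n)"
  define q where "q = (\<lambda>n. real (Suc n))"
  define w where "w = (\<lambda>n x. \<lfloor>q n * v x\<rfloor>)"
  define z where "z = (\<lambda>n x. if x = x0 then - (\<Sum>y\<in>UNIV - {x0}. w n y) else w n x)"
  have "sum (z n) UNIV = 0" for n
  proof -
    have "sum (z n) UNIV = z n x0 + sum (z n) (UNIV - {x0})" by (rule sum.remove) auto
    also have "sum (z n) (UNIV - {x0}) = (\<Sum>y\<in>UNIV - {x0}. w n y)"
      by (intro sum.cong) (auto simp: z_def)
    finally show ?thesis by (simp add: z_def)
  qed
  then have "quad_form D (\<lambda>x. z n x / q n) \<le> 0" for n
    using int[of "z n"] quad_form_cmult_vec[of D "1 / q n" "\<lambda>x. z n x"]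
    by (simp add: mult_nonneg_nonpos)
  moreover have "(\<lambda>n. z n x / q n) \<longlonglongrightarrow> v x" for x
  proof (cases "x = x0")
    case False
    then show ?thesis using LIMSEQ_floor_mult_divide[of "v x"] by (simp add: z_def w_def q_def)
  next
    case True
    have "(\<lambda>n. - (\<Sum>y\<in>UNIV - {x0}. w n y / q n)) \<longlonglongrightarrow> - (\<Sum>y\<in>UNIV - {x0}. v y)"
      unfolding w_def q_def by (intro tendsto_minus tendsto_sum LIMSEQ_floor_mult_divide)
    moreover have "- (\<Sum>y\<in>UNIV - {x0}. v y) = v x0"
      using v sum.remove[of UNIV x0 v] by simp
    ultimately show ?thesis
      using True by (simp add: z_def sum_divide_distrib)
  qed
  then have "(\<lambda>n. quad_form D (\<lambda>x. z n x / q n)) \<longlonglongrightarrow> quad_form D v"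
    unfolding quad_form_def by (intro tendsto_intros)
  ultimately show "quad_form D v \<le> 0" by (intro LIMSEQ_le_const2) auto
qed

lemma cond_neg_semidef_if_gr_exponent:
  fixes d :: "'n::finite \<Rightarrow> 'n \<Rightarrow> real"
  assumes sym: "\<And>i j. d i j = d j i" and diag: "\<And>i. d i i = 0"
    and gr: "gr_exponent UNIV d p"
  shows "cond_neg_semidef (\<lambda>i j. d i j powr p)"
proof (rule cond_neg_semidef_if_int)
  fix z :: "'n \<Rightarrow> int" assume z: "sum z UNIV = (0::int)"
  define cp where "cp = (\<lambda>x. nat (z x))"
  define cm where "cm = (\<lambda>x. nat (- z x))"
  have z_eq: "z x = int (cp x) - int (cm x)" for x
    unfolding cp_def cm_def by simp
  have "int (sum cp UNIV) = int (sum cm UNIV)"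
    using z unfolding of_nat_sum z_eq sum_subtractf by simp
  then have m: "sum cm UNIV = sum cp UNIV" by (simp only: of_nat_eq_iff)
  obtain a where a: "\<And>g. (\<Sum>k<sum cp UNIV. g (a k)) = (\<Sum>x\<in>UNIV. real (cp x) * g x)"
    using ex_seq_with_multiplicities[of cp] by blast
  obtain b where b: "\<And>g. (\<Sum>k<sum cp UNIV. g (b k)) = (\<Sum>x\<in>UNIV. real (cm x) * g x)"
    using ex_seq_with_multiplicities[of cm] unfolding m by blast
  have "(\<Sum>(k, l)\<in>{(k, l). k < l \<and> l < sum cp UNIV}. d (a k) (a l) powr p + d (b k) (b l) powr p)
          \<le> (\<Sum>j<sum cp UNIV. \<Sum>i<sum cp UNIV. d (a j) (b i) powr p)"
    using gr unfolding gr_exponent_def by blast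
  then show "quad_form (\<lambda>i j. d i j powr p) (\<lambda>x. z x) \<le> 0"
    using roundness_sum_diff_eq_quad_form[of "\<lambda>i j. d i j powr p", OF _ _ a b] sym diag
    by (simp add: z_eq)
qed

theorem gr_exponent_iff_cond_neg_semidef:
  fixes d :: "'n::finite \<Rightarrow> 'n \<Rightarrow> real"
  assumes "\<And>i j. d i j = d j i" and "\<And>i. d i i = 0"
  shows "gr_exponent UNIV d p \<longleftrightarrow> p \<ge> 0 \<and> cond_neg_semidef (\<lambda>i j. d i j powr p)"
proof
  assume "gr_exponent UNIV d p"
  then show "p \<ge> 0 \<and> cond_neg_semidef (\<lambda>i j. d i j powr p)"
    using cond_neg_semidef_if_gr_exponent[of d, OF assms] by (simp add: gr_exponent_def)
qed (use gr_exponent_if_cond_neg_semidef[of d, OF assms] in blast)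

section \<open>Null vectors and the dependence on the exponent\<close>

lemma sum_matrix_mult_eq:
  fixes A :: "'n::finite \<Rightarrow> 'n \<Rightarrow> real"
  assumes sym: "\<And>i j. A i j = A j i" and rows: "\<And>i. (\<Sum>j\<in>UNIV. A i j) = r"
  shows "(\<Sum>i\<in>UNIV. \<Sum>j\<in>UNIV. A i j * u j) = r * sum u UNIV"
proof -
  have "(\<Sum>i\<in>UNIV. \<Sum>j\<in>UNIV. A i j * u j) = (\<Sum>j\<in>UNIV. (\<Sum>i\<in>UNIV. A j i) * u j)"
    by (subst sum.swap) (simp add: sym sum_distrib_right)
  then show ?thesis by (simp add: rows sum_distrib_left mult.commute)
qed

text \<open>If \<open>\<langle>w, A u\<rangle> \<noteq> 0\<close> for some \<open>w\<close> in the hyperplane, moving \<open>u\<close> slightly in direction \<open>w\<close>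
  makes the form positive.\<close>
lemma cond_neg_semidef_mult_eq:
  fixes A :: "'n::finite \<Rightarrow> 'n \<Rightarrow> real"
  assumes sym: "\<And>i j. A i j = A j i" and cnd: "cond_neg_semidef A"
    and u: "sum u UNIV = 0" and zero: "quad_form A u = 0"
  shows "(\<Sum>j\<in>UNIV. A i j * u j) = (\<Sum>j\<in>UNIV. A k j * u j)"
proof -
  define w where "w = (\<lambda>x. (if x = i then 1 else 0) - (if x = k then 1 else (0::real)))"
  define B where "B = (\<Sum>x\<in>UNIV. w x * (\<Sum>j\<in>UNIV. A x j * u j))"
  define Q where "Q = quad_form A w"
  have w: "sum w UNIV = 0" by (simp add: w_def sum_subtractf)
  then have Q: "Q \<le> 0" using cnd by (simp add: cond_neg_semidef_def Q_def)
  have "B = 0"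
  proof (rule ccontr)
    assume B: "B \<noteq> 0"
    define t where "t = B / (1 - Q)"
    have "sum (\<lambda>x. u x + t * w x) UNIV = 0"
      using u w by (simp add: sum.distrib sum_distrib_left[symmetric])
    then have "quad_form A (\<lambda>x. u x + t * w x) \<le> 0"
      using cnd by (simp add: cond_neg_semidef_def)
    then have le: "2 * t * B + t\<^sup>2 * Q \<le> 0"
      using zero by (simp add: quad_form_add_vec[OF sym] B_def Q_def)
    have Qp: "1 - Q > 0" using Q by simp
    then have "t * (1 - Q) = B" by (simp add: t_def)
    then have "t * B = t * (t * (1 - Q))" by simp
    then have "t\<^sup>2 * Q = t\<^sup>2 - t * B" by (simp add: algebra_simps power2_eq_square)
    moreover have "t * B = B\<^sup>2 / (1 - Q)" by (simp add: t_def power2_eq_square)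
    then have "t * B > 0" using B Qp by simp
    ultimately show False using le zero_le_power2[of t] by (simp add: algebra_simps)
  qed
  then show ?thesis
    by (simp add: B_def w_def left_diff_distrib sum_subtractf sum_indicator_mult)
qed

lemma cond_neg_semidef_mult_eq_0:
  fixes A :: "'n::finite \<Rightarrow> 'n \<Rightarrow> real"
  assumes sym: "\<And>i j. A i j = A j i" and cnd: "cond_neg_semidef A"
    and rows: "\<And>i. (\<Sum>j\<in>UNIV. A i j) = r"
    and u: "sum u UNIV = 0" and zero: "quad_form A u = 0"
  shows "(\<Sum>j\<in>UNIV. A i j * u j) = 0"
proof -
  have "(\<Sum>k\<in>UNIV. \<Sum>j\<in>UNIV. A k j * u j) = (\<Sum>k\<in>(UNIV::'n set). \<Sum>j\<in>UNIV. A i j * u j)"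
    by (rule sum.cong[OF refl]) (rule cond_neg_semidef_mult_eq[OF sym cnd u zero])
  then show ?thesis using sum_matrix_mult_eq[OF sym rows, of u] u by simp
qed

text \<open>Since \<open>0 powr 0 = 0\<close>, the matrix \<open>D\<^sub>0\<close> is \<open>J - I\<close>, not \<open>J\<close>.\<close>
lemma quad_form_powr_0:
  assumes diag: "\<And>i. d i i = 0" and pos: "\<And>i j. i \<noteq> j \<Longrightarrow> d i j \<noteq> 0"
  shows "quad_form (\<lambda>i j. d i j powr 0) u = (sum u UNIV)\<^sup>2 - (\<Sum>i\<in>UNIV. (u i)\<^sup>2)"
proof -
  have "(\<lambda>i j. d i j powr 0) = (\<lambda>i j. 1 - (if i = j then 1 else 0))"
    using diag pos by (auto simp: fun_eq_iff)
  moreover have "quad_form (\<lambda>i j. if i = j then 1 else 0) u = (\<Sum>i\<in>UNIV. (u i)\<^sup>2)"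
    unfolding quad_form_def by (simp add: if_distrib[of "\<lambda>x. _ * x"] power2_eq_square cong: if_cong)
  ultimately show ?thesis by (simp add: quad_form_diff quad_form_const_1)
qed

lemma quad_form_powr_neg_below:
  fixes d :: "'n::finite \<Rightarrow> 'n \<Rightarrow> real"
  assumes sym: "\<And>i j. d i j = d j i" and diag: "\<And>i. d i i = 0"
    and pos: "\<And>i j. i \<noteq> j \<Longrightarrow> d i j > 0" and cnd: "cond_neg_semidef (\<lambda>i j. d i j powr p)"
    and b: "0 \<le> b" "b < p" and u: "sum u UNIV = 0" "u \<noteq> (\<lambda>_. 0)"
  shows "quad_form (\<lambda>i j. d i j powr b) u < 0"
proof (cases "b = 0")
  case True
  obtain k where "u k \<noteq> 0" using u(2) by auto
  then have "0 < (\<Sum>i\<in>UNIV. (u i)\<^sup>2)" by (intro sum_pos2[of _ k]) auto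
  then show ?thesis
    using True u(1) quad_form_powr_0[of d u] diag pos by (simp add: less_imp_neq[symmetric])
next
  case False
  with b have "0 < b" "0 < p" by auto
  then have "quad_form (\<lambda>i j. (d i j powr p) powr (b / p)) u < 0"
    using b by (intro quad_form_powr_neg[OF _ _ _ cnd _ _ u]) (auto simp: sym diag dest: pos)
  then show ?thesis using \<open>0 < p\<close> by (simp add: powr_powr)
qed

lemma cond_neg_semidef_powr_0:
  fixes d :: "'n::finite \<Rightarrow> 'n \<Rightarrow> real"
  assumes "\<And>i. d i i = 0" and "\<And>i j. i \<noteq> j \<Longrightarrow> d i j \<noteq> 0"
  shows "cond_neg_semidef (\<lambda>i j. d i j powr 0)"
  unfolding cond_neg_semidef_def
proof (intro allI impI)
  fix v :: "'n \<Rightarrow> real" assume "sum v UNIV = 0"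
  then have "quad_form (\<lambda>i j. d i j powr 0) v = - (\<Sum>i\<in>UNIV. (v i)\<^sup>2)"
    using quad_form_powr_0[of d v, OF assms] by simp
  moreover have "0 \<le> (\<Sum>i\<in>UNIV. (v i)\<^sup>2)" by (simp add: sum_nonneg)
  ultimately show "quad_form (\<lambda>i j. d i j powr 0) v \<le> 0" by linarith
qed

text \<open>By compactness of the unit sphere of the hyperplane.\<close>
lemma quad_form_le_uniform:
  fixes A :: "'n::finite \<Rightarrow> 'n \<Rightarrow> real"
  assumes neg: "\<And>u. sum u UNIV = 0 \<Longrightarrow> u \<noteq> (\<lambda>_. 0) \<Longrightarrow> quad_form A u < 0"
  obtains e where "e > 0" "\<And>u. sum u UNIV = 0 \<Longrightarrow> quad_form A u \<le> - e * (\<Sum>i\<in>UNIV. (u i)\<^sup>2)"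
proof -
  define U where "U = {v::real^'n. sum (($) v) UNIV = 0} \<inter> sphere 0 1"
  define f where "f = (\<lambda>v::real^'n. quad_form A (($) v))"
  have "\<exists>M<0. \<forall>y\<in>U. f y \<le> M"
  proof (cases "U = {}")
    case False
    have "closed {v::real^'n. sum (($) v) UNIV = 0}"
      by (intro closed_Collect_eq continuous_intros)
    then have "compact U" unfolding U_def by (simp add: compact_Int_closed Int_commute)
    moreover have "continuous_on U f" unfolding f_def quad_form_def by (intro continuous_intros)
    ultimately obtain v0 where v0: "v0 \<in> U" "\<forall>y\<in>U. f y \<le> f v0"
      using continuous_attains_sup[OF _ False] by blast
    then have "v0 \<noteq> 0" by (auto simp: U_def)
    then have "(($) v0) \<noteq> (\<lambda>_. 0)" by (metis vec_eq_iff zero_index)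
    then have "f v0 < 0" using neg v0(1) by (simp add: U_def f_def)
    then show ?thesis using v0 by blast
  qed (intro exI[of _ "-1"], simp)
  then obtain M where M: "M < 0" "\<And>y. y \<in> U \<Longrightarrow> f y \<le> M" by blast
  have "quad_form A u \<le> M * (\<Sum>i\<in>UNIV. (u i)\<^sup>2)" if u: "sum u UNIV = 0" for u
  proof (cases "u = (\<lambda>_. 0)")
    case True
    then show ?thesis by (simp add: quad_form_def)
  next
    case False
    define x where "x = (\<chi> i. u i)"
    have "x \<noteq> 0" using False by (auto simp: x_def vec_eq_iff)
    have "sgn x \<in> U"
      using u \<open>x \<noteq> 0\<close> by (simp add: U_def x_def sgn_div_norm norm_sgn sum_distrib_left[symmetric])
    have "(\<lambda>i. norm x * sgn x $ i) = u"
      using \<open>x \<noteq> 0\<close> by (simp add: x_def sgn_div_norm fun_eq_iff)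
    then have "quad_form A u = (norm x)\<^sup>2 * f (sgn x)"
      using quad_form_cmult_vec[of A "norm x" "($) (sgn x)"] by (simp add: f_def)
    also have "\<dots> \<le> (norm x)\<^sup>2 * M" using M(2)[OF \<open>sgn x \<in> U\<close>] by (intro mult_left_mono) auto
    also have "(norm x)\<^sup>2 = (\<Sum>i\<in>UNIV. (u i)\<^sup>2)"
      by (simp add: x_def norm_vec_def L2_set_def sum_nonneg)
    finally show ?thesis by (simp add: mult.commute)
  qed
  then show ?thesis using M(1) by (intro that[of "- M"]) auto
qed

lemma quad_form_le_abs_sum:
  fixes A :: "'n::finite \<Rightarrow> 'n \<Rightarrow> real"
  shows "quad_form A u \<le> (\<Sum>i\<in>UNIV. \<Sum>j\<in>UNIV. \<bar>A i j\<bar>) * (\<Sum>i\<in>UNIV. (u i)\<^sup>2)"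
proof -
  define N where "N = (\<Sum>i\<in>UNIV. (u i)\<^sup>2)"
  have ui: "(u i)\<^sup>2 \<le> N" for i unfolding N_def by (rule member_le_sum) auto
  have "\<bar>u i * u j\<bar> \<le> N" for i j
  proof -
    have "\<bar>u i * u j\<bar> \<le> ((u i)\<^sup>2 + (u j)\<^sup>2) / 2"
      using sum_squares_bound[of "\<bar>u i\<bar>" "\<bar>u j\<bar>"] by (simp add: abs_mult power2_eq_square)
    then show ?thesis using ui[of i] ui[of j] by simp
  qed
  then have "u i * u j * A i j \<le> \<bar>A i j\<bar> * N" for i j
    by (metis abs_ge_self abs_mult abs_ge_zero mult.commute mult_right_mono order.trans)
  then have "quad_form A u \<le> (\<Sum>i\<in>UNIV. \<Sum>j\<in>UNIV. \<bar>A i j\<bar> * N)"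
    unfolding quad_form_def by (intro sum_mono)
  then show ?thesis by (simp add: N_def sum_distrib_right)
qed

lemma tendsto_powr_const_base:
  fixes c :: real
  assumes "ps \<longlonglongrightarrow> q"
  shows "(\<lambda>n. c powr ps n) \<longlonglongrightarrow> c powr q"
  using assms by (cases "c = 0") (auto intro!: tendsto_powr)

lemma cond_neg_semidef_powr_limit:
  fixes d :: "'n::finite \<Rightarrow> 'n \<Rightarrow> real"
  assumes "ps \<longlonglongrightarrow> q" and "\<And>n. cond_neg_semidef (\<lambda>i j. d i j powr ps n)"
  shows "cond_neg_semidef (\<lambda>i j. d i j powr q)"
  unfolding cond_neg_semidef_def
proof (intro allI impI)
  fix u :: "'n \<Rightarrow> real" assume "sum u UNIV = 0"
  then have "quad_form (\<lambda>i j. d i j powr ps n) u \<le> 0" for n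
    using assms(2) by (simp add: cond_neg_semidef_def)
  moreover have "(\<lambda>n. quad_form (\<lambda>i j. d i j powr ps n) u) \<longlonglongrightarrow> quad_form (\<lambda>i j. d i j powr q) u"
    unfolding quad_form_def by (intro tendsto_intros tendsto_powr_const_base assms(1))
  ultimately show "quad_form (\<lambda>i j. d i j powr q) u \<le> 0" by (intro LIMSEQ_le_const2) auto
qed

lemma ex_cond_neg_semidef_powr_gt:
  fixes d :: "'n::finite \<Rightarrow> 'n \<Rightarrow> real"
  assumes neg: "\<And>u. sum u UNIV = 0 \<Longrightarrow> u \<noteq> (\<lambda>_. 0) \<Longrightarrow> quad_form (\<lambda>i j. d i j powr q) u < 0"
  shows "\<exists>p>q. cond_neg_semidef (\<lambda>i j. d i j powr p)"
proof -
  obtain e where e: "e > 0"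
    and E: "\<And>u. sum u UNIV = 0 \<Longrightarrow> quad_form (\<lambda>i j. d i j powr q) u \<le> - e * (\<Sum>i\<in>UNIV. (u i)\<^sup>2)"
    using quad_form_le_uniform[OF neg] by blast
  define ps where "ps = (\<lambda>n. q + inverse (real (Suc n)))"
  define \<Delta> where "\<Delta> = (\<lambda>n. \<Sum>i\<in>UNIV. \<Sum>j\<in>UNIV. \<bar>d i j powr ps n - d i j powr q\<bar>)"
  have "ps \<longlonglongrightarrow> q"
    unfolding ps_def using tendsto_add[OF tendsto_const LIMSEQ_inverse_real_of_nat, of q] by simp
  then have "\<Delta> \<longlonglongrightarrow> (\<Sum>i\<in>UNIV. \<Sum>j\<in>UNIV. \<bar>d i j powr q - d i j powr q\<bar>)"
    unfolding \<Delta>_def by (intro tendsto_intros tendsto_powr_const_base)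
  then have "eventually (\<lambda>n. \<Delta> n < e) sequentially" using e by (simp add: order_tendstoD)
  then obtain n where n: "\<Delta> n < e" by (auto simp: eventually_sequentially)
  have "quad_form (\<lambda>i j. d i j powr ps n) u \<le> 0" if u: "sum u UNIV = 0" for u
  proof -
    define N where "N = (\<Sum>i\<in>UNIV. (u i)\<^sup>2)"
    have N: "N \<ge> 0" unfolding N_def by (intro sum_nonneg) auto
    have "quad_form (\<lambda>i j. d i j powr ps n) u =
            quad_form (\<lambda>i j. d i j powr q) u + quad_form (\<lambda>i j. d i j powr ps n - d i j powr q) u"
      by (simp add: quad_form_diff)
    also have "\<dots> \<le> - e * N + \<Delta> n * N"
      using E[OF u] quad_form_le_abs_sum[of "\<lambda>i j. d i j powr ps n - d i j powr q" u]
      by (simp add: N_def \<Delta>_def)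
    also have "\<dots> \<le> 0" using mult_right_mono[OF less_imp_le[OF n] N] by simp
    finally show ?thesis .
  qed
  moreover have "ps n > q" by (simp add: ps_def)
  ultimately show ?thesis by (auto simp: cond_neg_semidef_def)
qed

lemma dist_matrix_mult_nth: "(dist_matrix d p *v u) $ i = (\<Sum>j\<in>UNIV. d i j powr p * u $ j)"
  by (simp add: matrix_vector_mult_def dist_matrix_def)

lemma inner_dist_matrix_mult:
  "u \<bullet> (dist_matrix d p *v u) = quad_form (\<lambda>i j. d i j powr p) (($) u)"
  unfolding inner_vec_def dist_matrix_mult_nth quad_form_def
  by (simp add: sum_distrib_left algebra_simps)

lemma det_eq_0_iff_ex_mult_eq_0:
  fixes A :: "real^'n^'n"
  shows "det A = 0 \<longleftrightarrow> (\<exists>u. u \<noteq> 0 \<and> A *v u = 0)"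
  by (metis invertible_det_nz invertible_left_inverse matrix_left_invertible_ker)

locale permuted_rows_metric =
  fixes d :: "'n::finite \<Rightarrow> 'n \<Rightarrow> real"
  assumes metric: "metric_on UNIV d"
    and card_ge_2: "CARD('n) \<ge> 2"
    and rows_permuted: "\<forall>i k. \<exists>\<sigma>. \<sigma> permutes (UNIV :: 'n set) \<and> (\<forall>j. d i j = d k (\<sigma> j))"
begin

lemma d_sym: "d i j = d j i"
  and d_diag: "d i i = 0"
  using metric by (auto simp: metric_on_def)

lemma d_pos:
  assumes "i \<noteq> j"
  shows "d i j > 0"
proof -
  have "d i i \<le> d i j + d j i" and "d i j \<noteq> 0"
    using metric assms unfolding metric_on_def by blast+
  then show ?thesis using d_sym[of j i] d_diag[of i] by simp
qed

lemma gr_exponent_iff: "gr_exponent UNIV d p \<longleftrightarrow> p \<ge> 0 \<and> cond_neg_semidef (\<lambda>i j. d i j powr p)"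
  by (rule gr_exponent_iff_cond_neg_semidef) (simp_all add: d_sym d_diag)

lemma row_sum_powr_eq: "(\<Sum>j\<in>UNIV. d i j powr p) = (\<Sum>j\<in>UNIV. d k j powr p)"
proof -
  obtain \<sigma> where \<sigma>: "\<sigma> permutes UNIV" "\<And>j. d i j = d k (\<sigma> j)" using rows_permuted by blast
  have "(\<Sum>j\<in>UNIV. d k j powr p) = (\<Sum>j\<in>UNIV. d k (\<sigma> j) powr p)"
    using sum.permute[OF \<sigma>(1), of "\<lambda>j. d k j powr p"] by simp
  then show ?thesis by (simp add: \<sigma>(2))
qed

lemma row_sum_powr_pos: "(\<Sum>j\<in>UNIV. d i j powr p) > 0"
proof -
  have "\<not> (UNIV :: 'n set) \<subseteq> {i}"
  proof
    assume "(UNIV :: 'n set) \<subseteq> {i}"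
    then have "CARD('n) \<le> card {i}" by (intro card_mono) auto
    then show False using card_ge_2 by simp
  qed
  then obtain j where "j \<noteq> i" by blast
  then have "0 < d i j powr p" using d_pos[of i j] by simp
  also have "\<dots> \<le> (\<Sum>j\<in>UNIV. d i j powr p)" by (rule member_le_sum) auto
  finally show ?thesis .
qed

lemma sum_eq_0_if_dist_matrix_mult_eq_0:
  assumes "dist_matrix d p *v u = 0"
  shows "(\<Sum>i\<in>UNIV. u $ i) = 0"
proof -
  define r where "r = (\<Sum>j\<in>UNIV. d undefined j powr p)"
  have "(\<Sum>i\<in>UNIV. \<Sum>j\<in>UNIV. d i j powr p * u $ j) = r * (\<Sum>i\<in>UNIV. u $ i)"
    by (rule sum_matrix_mult_eq) (simp_all add: d_sym r_def row_sum_powr_eq[of _ p undefined])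
  moreover have "(\<Sum>i\<in>UNIV. \<Sum>j\<in>UNIV. d i j powr p * u $ j) = 0"
    using assms by (simp add: vec_eq_iff dist_matrix_mult_nth)
  moreover have "r > 0" unfolding r_def by (rule row_sum_powr_pos)
  ultimately show ?thesis by simp
qed

lemma dist_matrix_mult_eq_0_iff:
  assumes cnd: "cond_neg_semidef (\<lambda>i j. d i j powr p)"
  shows "((\<Sum>i\<in>UNIV. u $ i) = 0 \<and> u \<bullet> (dist_matrix d p *v u) = 0) \<longleftrightarrow> dist_matrix d p *v u = 0"
proof
  assume "(\<Sum>i\<in>UNIV. u $ i) = 0 \<and> u \<bullet> (dist_matrix d p *v u) = 0"
  then have "(\<Sum>j\<in>UNIV. d i j powr p * u $ j) = 0" for i
    by (intro cond_neg_semidef_mult_eq_0[OF _ cnd, where r = "\<Sum>j\<in>UNIV. d undefined j powr p"])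
      (simp_all add: d_sym row_sum_powr_eq[of _ p undefined] inner_dist_matrix_mult)
  then show "dist_matrix d p *v u = 0" by (simp add: vec_eq_iff dist_matrix_mult_nth)
qed (simp add: sum_eq_0_if_dist_matrix_mult_eq_0)

lemma det_dist_matrix_neq_0_below:
  assumes gr: "gr_exponent UNIV d p" and b: "0 \<le> b" "b < p"
  shows "det (dist_matrix d b) \<noteq> 0"
proof
  assume "det (dist_matrix d b) = 0"
  then obtain u where u: "u \<noteq> 0" "dist_matrix d b *v u = 0"
    by (auto simp: det_eq_0_iff_ex_mult_eq_0)
  then have "(($) u) \<noteq> (\<lambda>_. 0)" by (metis vec_eq_iff zero_index)
  then have "quad_form (\<lambda>i j. d i j powr b) (($) u) < 0"
    using gr b sum_eq_0_if_dist_matrix_mult_eq_0[OF u(2)]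
    by (intro quad_form_powr_neg_below[OF d_sym d_diag d_pos]) (auto simp: gr_exponent_iff)
  then show False using u(2) inner_dist_matrix_mult[of u d b] by simp
qed

lemma ex_gr_exponent_gt:
  assumes gr: "gr_exponent UNIV d q" and det: "det (dist_matrix d q) \<noteq> 0"
  shows "\<exists>p>q. gr_exponent UNIV d p"
proof -
  have cnd: "cond_neg_semidef (\<lambda>i j. d i j powr q)" and "q \<ge> 0"
    using gr by (auto simp: gr_exponent_iff)
  have "quad_form (\<lambda>i j. d i j powr q) u < 0" if u: "sum u UNIV = 0" "u \<noteq> (\<lambda>_. 0)" for u
  proof (rule ccontr)
    assume "\<not> quad_form (\<lambda>i j. d i j powr q) u < 0"
    moreover have "quad_form (\<lambda>i j. d i j powr q) u \<le> 0"
      using cnd u(1) by (simp add: cond_neg_semidef_def)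
    ultimately have "quad_form (\<lambda>i j. d i j powr q) u = 0" by simp
    then have "dist_matrix d q *v (\<chi> i. u i) = 0"
      using dist_matrix_mult_eq_0_iff[OF cnd, of "\<chi> i. u i"] u(1)
      by (simp add: inner_dist_matrix_mult vec_lambda_inverse)
    moreover have "(\<chi> i. u i) \<noteq> 0" using u(2) by (auto simp: vec_eq_iff)
    ultimately show False using det det_eq_0_iff_ex_mult_eq_0 by blast
  qed
  then obtain p where "p > q" "cond_neg_semidef (\<lambda>i j. d i j powr p)"
    using ex_cond_neg_semidef_powr_gt by blast
  then show ?thesis using \<open>q \<ge> 0\<close> by (auto simp: gr_exponent_iff)
qed

lemma gr_exponent_0: "gr_exponent UNIV d 0"
proof -
  have "cond_neg_semidef (\<lambda>i j. d i j powr 0)"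
    by (rule cond_neg_semidef_powr_0) (use d_diag d_pos in fastforce)+
  then show ?thesis by (simp add: gr_exponent_iff)
qed

lemma gr_exponent_Sup:
  assumes bdd: "bdd_above {p. gr_exponent UNIV d p}"
  shows "gr_exponent UNIV d (Sup {p. gr_exponent UNIV d p})"
proof -
  let ?S = "{p. gr_exponent UNIV d p}"
  have "Sup ?S \<in> closure ?S"
    using gr_exponent_0 bdd by (intro closure_contains_Sup) auto
  then obtain ps where ps: "\<And>n. ps n \<in> ?S" "ps \<longlonglongrightarrow> Sup ?S"
    unfolding closure_sequential by blast
  have "cond_neg_semidef (\<lambda>i j. d i j powr Sup ?S)"
    using ps by (intro cond_neg_semidef_powr_limit[OF ps(2)]) (simp add: gr_exponent_iff)
  moreover have "0 \<le> Sup ?S" using gr_exponent_0 bdd by (intro cSup_upper) auto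
  ultimately show ?thesis by (simp add: gr_exponent_iff)
qed

lemma gen_roundness_le_if_det_eq_0:
  assumes "0 \<le> b" "det (dist_matrix d b) = 0"
  shows "gen_roundness UNIV d \<le> ereal b"
proof -
  have "p \<le> b" if "gr_exponent UNIV d p" for p
    using det_dist_matrix_neq_0_below[OF that] assms by (meson not_le)
  then show ?thesis unfolding gen_roundness_def by (auto intro!: Sup_least)
qed

lemma gen_roundness_finite:
  assumes "gen_roundness UNIV d < \<infinity>"
  shows "gen_roundness UNIV d = ereal (Sup {p. gr_exponent UNIV d p})"
    and "gr_exponent UNIV d (Sup {p. gr_exponent UNIV d p})"
proof -
  let ?S = "{p. gr_exponent UNIV d p}"
  have "ereal 0 \<le> gen_roundness UNIV d"
    unfolding gen_roundness_def using gr_exponent_0 by (auto intro: Sup_upper)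
  with assms obtain r where r: "gen_roundness UNIV d = ereal r" by (cases "gen_roundness UNIV d") auto
  have upper: "ereal p \<le> gen_roundness UNIV d" if "p \<in> ?S" for p
    unfolding gen_roundness_def using that by (auto intro: Sup_upper)
  then have "bdd_above ?S" using r by (auto simp: bdd_above_def)
  then show gr: "gr_exponent UNIV d (Sup ?S)" by (rule gr_exponent_Sup)
  show "gen_roundness UNIV d = ereal (Sup ?S)"
  proof (rule antisym)
    show "gen_roundness UNIV d \<le> ereal (Sup ?S)"
      unfolding gen_roundness_def Sup_le_iff using \<open>bdd_above ?S\<close> by (auto intro: cSup_upper)
  qed (use upper gr in blast)
qed

lemma gen_roundness_eq_Inf:
  "gen_roundness UNIV d = Inf {ereal p | p. p \<ge> 0 \<and> det (dist_matrix d p) = 0}"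
proof (rule antisym)
  show "gen_roundness UNIV d \<le> Inf {ereal p | p. p \<ge> 0 \<and> det (dist_matrix d p) = 0}"
    using gen_roundness_le_if_det_eq_0 by (auto intro: Inf_greatest)
  show "Inf {ereal p | p. p \<ge> 0 \<and> det (dist_matrix d p) = 0} \<le> gen_roundness UNIV d"
  proof (cases "gen_roundness UNIV d < \<infinity>")
    case True
    let ?q = "Sup {p. gr_exponent UNIV d p}"
    have "gr_exponent UNIV d ?q" by (rule gen_roundness_finite(2)[OF True])
    moreover have "p \<le> ?q" if "gr_exponent UNIV d p" for p
    proof -
      have "ereal p \<le> gen_roundness UNIV d"
        unfolding gen_roundness_def using that by (auto intro: Sup_upper)
      then show ?thesis using gen_roundness_finite(1)[OF True] by simp
    qed
    ultimately have "det (dist_matrix d ?q) = 0" and "?q \<ge> 0"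
      using ex_gr_exponent_gt by (meson not_le, simp add: gr_exponent_iff)
    then show ?thesis
      using gen_roundness_finite(1)[OF True] by (auto intro: Inf_lower)
  qed simp
qed

end

theorem theorem3p1:
  fixes d :: "'n::finite \<Rightarrow> 'n \<Rightarrow> real"
  assumes metric: "metric_on UNIV d"
    and card: "CARD('n) \<ge> 2"
    and rows: "\<forall>i k. \<exists>\<sigma>. \<sigma> permutes (UNIV :: 'n set) \<and> (\<forall>j. d i j = d k (\<sigma> j))"
  shows "gen_roundness UNIV d = Inf {ereal p | p. p \<ge> 0 \<and> det (dist_matrix d p) = 0} \<and>
         (gen_roundness UNIV d < \<infinity> \<longrightarrow>
           (\<forall>u :: real^'n.
              ((\<Sum>i\<in>UNIV. u $ i) = 0 \<and>
               u \<bullet> (dist_matrix d (real_of_ereal (gen_roundness UNIV d)) *v u) = 0)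
              \<longleftrightarrow> dist_matrix d (real_of_ereal (gen_roundness UNIV d)) *v u = 0))"
proof -
  interpret permuted_rows_metric d using assms by unfold_locales
  have "cond_neg_semidef (\<lambda>i j. d i j powr real_of_ereal (gen_roundness UNIV d))"
    if "gen_roundness UNIV d < \<infinity>"
    using gen_roundness_finite[OF that] by (simp add: gr_exponent_iff)
  then show ?thesis using gen_roundness_eq_Inf dist_matrix_mult_eq_0_iff by blast
qed

end
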